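(* Let $\psi(\theta;y,x)$ be an $\mathbb R^q$-valued function on $\Theta\times\mathcal Y\times\mathcal X$, $\Theta\subseteq\mathbb R^q$, and let $\theta(\cdot)$ be the estimating-equation (EE) functional defined by: $\theta(P)$ is the unique solution $\theta\in\Theta$ of $E_P[\psi(\theta;Y,X)]=0$ (assumed to exist uniquely for all joint distributions on which it is evaluated). Fix a Markov kernel $P_{Y|X}$. Then $\theta(\cdot)$ is well-specified for $P_{Y|X}$ if and only if there exists $\theta_0\in\Theta$ such that $E[\psi(\theta_0;Y,X)\mid X=x]=\int\psi(\theta_0;y,x)P_{Y|X=x}(dy)=0$ for all $x\in\mathcal X$.
   Context: A joint distribution $P$ of $(Y,X)$ on $\mathcal Y\times\mathcal X$ is written $P=P_{Y|X}\otimes P_X$, meaning $P(dy,dx)=P_{Y|X=x}(dy)P_X(dx)$, with $P_X$ the marginal of $X$ and $P_{Y|X}$ a Markov kernel defined for every $x$. There is a designated set of "acceptable" regressor distributions; $P_{Y|X}\otimes P_X$ is in the domain of $\theta$ for every acceptable $P_X$, and the set is closed under mixing: if $P_X$ is acceptable and $P_X'$ is any distribution (e.g. a point mass $\delta_x$), then $(1-t)P_X+tP_X'$ is acceptable for $0\le t<1$. The functional is well-specified for $P_{Y|X}$ if $\theta(P_{Y|X}\otimes P_X)=\theta(P_{Y|X}\otimes P_X')$ for all acceptable $P_X,P_X'$. All expectations are assumed to exist. *)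

theory Defs
  imports "HOL-Probability.Probability"
begin

definition joint :: "'y measure \<Rightarrow> 'x measure \<Rightarrow> ('x \<Rightarrow> 'y measure) \<Rightarrow> 'x measure \<Rightarrow> ('y \<times> 'x) measure" where
  "joint MY MX K PX = PX \<bind> (\<lambda>x. K x \<bind> (\<lambda>y. return (MY \<Otimes>\<^sub>M MX) (y, x)))"

definition mix_measure :: "'x measure \<Rightarrow> real \<Rightarrow> 'x measure \<Rightarrow> 'x measure \<Rightarrow> 'x measure" where
  "mix_measure MX t P P' = measure_of (space MX) (sets MX)
     (\<lambda>A. ennreal (1 - t) * emeasure P A + ennreal t * emeasure P' A)"

definition ee_theta :: "'a::euclidean_space set \<Rightarrow> ('a \<Rightarrow> 'y \<Rightarrow> 'x \<Rightarrow> 'a) \<Rightarrow> ('y \<times> 'x) measure \<Rightarrow> 'a" where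
  "ee_theta \<Theta> \<psi> P = (THE \<theta>. \<theta> \<in> \<Theta> \<and> (\<integral>z. (case z of (y, x) \<Rightarrow> \<psi> \<theta> y x) \<partial>P) = 0)"

definition well_specified :: "(('y \<times> 'x) measure \<Rightarrow> 'b) \<Rightarrow> 'y measure \<Rightarrow> 'x measure \<Rightarrow> 'x measure set \<Rightarrow> ('x \<Rightarrow> 'y measure) \<Rightarrow> bool" where
  "well_specified \<theta>f MY MX Acc K \<longleftrightarrow>
     (\<forall>PX\<in>Acc. \<forall>PX'\<in>Acc. \<theta>f (joint MY MX K PX) = \<theta>f (joint MY MX K PX'))"

end

theory Submission
  imports Defs
begin

text \<open>
  Disintegrating the joint law, \<open>E[\<psi>(\<theta>; Y, X)] = \<integral> m(\<theta>, x) dP\<^sub>X(x)\<close> with the conditional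
  mean \<open>m(\<theta>, x) = E[\<psi>(\<theta>; Y, X) | X = x]\<close>. If \<open>m(\<theta>\<^sub>0, \<cdot>)\<close> vanishes identically, \<open>\<theta>\<^sub>0\<close> solves the
  estimating equation under every regressor law, so uniqueness forces \<open>\<theta>(P) = \<theta>\<^sub>0\<close> throughout.
  Conversely, if \<open>\<theta>(P) = \<theta>\<^sub>0\<close> for all acceptable \<open>P\<^sub>X\<close>, then \<open>\<integral> m(\<theta>\<^sub>0, \<cdot>) dQ = 0\<close> for every
  acceptable \<open>Q\<close>; applied to \<open>Q\<^sub>0\<close> and to the mixture \<open>(Q\<^sub>0 + \<delta>\<^sub>x) / 2\<close> this gives
  \<open>m(\<theta>\<^sub>0, x) = 0\<close> for every \<open>x\<close>.
\<close>

lemma sets_mix_measure [simp, measurable_cong]: "sets (mix_measure MX t P P') = sets MX"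
  unfolding mix_measure_def by simp

lemma space_mix_measure [simp]: "space (mix_measure MX t P P') = space MX"
  unfolding mix_measure_def by (simp add: space_measure_of_conv)

lemma emeasure_mix_measure:
  assumes P: "sets P = sets MX" and P': "sets P' = sets MX" and A: "A \<in> sets MX"
  shows "emeasure (mix_measure MX t P P') A = ennreal (1 - t) * emeasure P A + ennreal t * emeasure P' A"
  unfolding mix_measure_def
proof (rule emeasure_measure_of_sigma[OF sets.sigma_algebra_axioms _ _ A])
  show "positive (sets MX) (\<lambda>A. ennreal (1 - t) * emeasure P A + ennreal t * emeasure P' A)"
    by (simp add: positive_def)
  show "countably_additive (sets MX) (\<lambda>A. ennreal (1 - t) * emeasure P A + ennreal t * emeasure P' A)"
    unfolding countably_additive_def
  proof (intro allI impI)
    fix B :: "nat \<Rightarrow> _"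
    assume B: "range B \<subseteq> sets MX" "disjoint_family B" "\<Union> (range B) \<in> sets MX"
    have "(\<Sum>i. emeasure P (B i)) = emeasure P (\<Union> (range B))"
      "(\<Sum>i. emeasure P' (B i)) = emeasure P' (\<Union> (range B))"
      using B P P' by (intro suminf_emeasure; auto)+
    then show "(\<Sum>i. ennreal (1 - t) * emeasure P (B i) + ennreal t * emeasure P' (B i)) =
        ennreal (1 - t) * emeasure P (\<Union> (range B)) + ennreal t * emeasure P' (\<Union> (range B))"
      by (simp add: suminf_add[symmetric])
  qed
qed

lemma nn_integral_mix_measure:
  assumes P: "sets P = sets MX" and P': "sets P' = sets MX" and f: "f \<in> borel_measurable MX"
  shows "(\<integral>\<^sup>+x. f x \<partial>mix_measure MX t P P') =
    ennreal (1 - t) * (\<integral>\<^sup>+x. f x \<partial>P) + ennreal t * (\<integral>\<^sup>+x. f x \<partial>P')"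
  using f
proof induction
  case (cong f g)
  have "space P = space MX" "space P' = space MX"
    using P P' by (auto dest: sets_eq_imp_space_eq)
  then have "integral\<^sup>N (mix_measure MX t P P') f = integral\<^sup>N (mix_measure MX t P P') g"
    "integral\<^sup>N P f = integral\<^sup>N P g" "integral\<^sup>N P' f = integral\<^sup>N P' g"
    using cong.hyps(3) by (auto intro!: nn_integral_cong)
  then show ?case using cong(4) by simp
next
  case (set A)
  then show ?case using P P' by (simp add: emeasure_mix_measure)
next
  case (mult f c)
  then have "f \<in> borel_measurable (mix_measure MX t P P')"
    "f \<in> borel_measurable P" "f \<in> borel_measurable P'"
    using P P' by (auto cong: measurable_cong_sets)
  with mult show ?case
    by (simp add: nn_integral_cmult distrib_left mult.left_commute)
next
  case (add f g)
  then have "f \<in> borel_measurable (mix_measure MX t P P')"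
    "f \<in> borel_measurable P" "f \<in> borel_measurable P'"
    "g \<in> borel_measurable (mix_measure MX t P P')"
    "g \<in> borel_measurable P" "g \<in> borel_measurable P'"
    using P P' by (auto cong: measurable_cong_sets)
  with add show ?case
    by (simp add: nn_integral_add algebra_simps)
next
  case (seq U)
  then have m: "\<And>i. U i \<in> borel_measurable (mix_measure MX t P P')"
    "\<And>i. U i \<in> borel_measurable P" "\<And>i. U i \<in> borel_measurable P'"
    using P P' by (auto cong: measurable_cong_sets)
  have "incseq (\<lambda>i. ennreal (1 - t) * integral\<^sup>N P (U i))"
    "incseq (\<lambda>i. ennreal t * integral\<^sup>N P' (U i))"
    using seq(3) m by (auto simp: incseq_def le_fun_def intro!: mult_left_mono nn_integral_mono)
  with seq m show ?case
    by (simp add: nn_integral_monotone_convergence_SUP ennreal_SUP_add[symmetric]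
        SUP_mult_left_ennreal image_comp)
qed

lemma
  fixes h :: "_ \<Rightarrow> real"
  assumes P: "sets P = sets MX" and P': "sets P' = sets MX" and t: "0 \<le> t" "t \<le> 1"
    and h: "h \<in> borel_measurable MX" and iP: "integrable P h" and iP': "integrable P' h"
  shows integrable_mix_measure_real: "integrable (mix_measure MX t P P') h"
    and integral_mix_measure_real:
      "(\<integral>x. h x \<partial>mix_measure MX t P P') = (1 - t) * (\<integral>x. h x \<partial>P) + t * (\<integral>x. h x \<partial>P')"
proof -
  have "(\<integral>\<^sup>+x. ennreal (norm (h x)) \<partial>mix_measure MX t P P') < \<top>"
    using iP iP' h t
    by (simp add: nn_integral_mix_measure[OF P P'] integrable_iff_bounded ennreal_mult_less_top)
  moreover have "h \<in> borel_measurable (mix_measure MX t P P')"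
    using h by (simp cong: measurable_cong_sets)
  ultimately show I: "integrable (mix_measure MX t P P') h"
    by (simp add: integrable_iff_bounded)
  have enn2real_mix: "enn2real (ennreal (1 - t) * a + ennreal t * b) = (1 - t) * enn2real a + t * enn2real b"
    if "a \<noteq> \<infinity>" "b \<noteq> \<infinity>" for a b
    using that t by (simp add: enn2real_plus enn2real_mult ennreal_mult_less_top less_top)
  have "(\<lambda>x. ennreal (h x)) \<in> borel_measurable MX" "(\<lambda>x. ennreal (- h x)) \<in> borel_measurable MX"
    using h by measurable
  note nn_mix = this[THEN nn_integral_mix_measure[OF P P']]
  show "(\<integral>x. h x \<partial>mix_measure MX t P P') = (1 - t) * (\<integral>x. h x \<partial>P) + t * (\<integral>x. h x \<partial>P')"
    unfolding real_lebesgue_integral_def[OF I] real_lebesgue_integral_def[OF iP]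
      real_lebesgue_integral_def[OF iP'] nn_mix
    using integrableD(2,3)[OF iP] integrableD(2,3)[OF iP']
    by (simp add: enn2real_mix; simp add: algebra_simps)
qed

lemma integrable_from_components:
  fixes f :: "_ \<Rightarrow> 'b::euclidean_space"
  assumes "\<And>b. b \<in> Basis \<Longrightarrow> integrable M (\<lambda>x. f x \<bullet> b)"
  shows "integrable M f"
proof -
  have "integrable M (\<lambda>x. \<Sum>b\<in>Basis. (f x \<bullet> b) *\<^sub>R b)"
    by (rule Bochner_Integration.integrable_sum) (auto intro: integrable_scaleR_left assms)
  then show ?thesis by (simp add: euclidean_representation)
qed

lemma
  fixes h :: "_ \<Rightarrow> 'b::euclidean_space"
  assumes P: "sets P = sets MX" and P': "sets P' = sets MX" and t: "0 \<le> t" "t \<le> 1"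
    and h: "h \<in> borel_measurable MX" and iP: "integrable P h" and iP': "integrable P' h"
  shows integrable_mix_measure: "integrable (mix_measure MX t P P') h"
    and integral_mix_measure:
      "(\<integral>x. h x \<partial>mix_measure MX t P P') = (1 - t) *\<^sub>R (\<integral>x. h x \<partial>P) + t *\<^sub>R (\<integral>x. h x \<partial>P')"
proof -
  have hb: "(\<lambda>x. h x \<bullet> b) \<in> borel_measurable MX" for b
    using h by measurable
  note component = integrable_mix_measure_real[OF P P' t hb] integral_mix_measure_real[OF P P' t hb]
  show I: "integrable (mix_measure MX t P P') h"
    by (rule integrable_from_components) (intro component(1) integrable_inner_left iP iP')
  show "(\<integral>x. h x \<partial>mix_measure MX t P P') = (1 - t) *\<^sub>R (\<integral>x. h x \<partial>P) + t *\<^sub>R (\<integral>x. h x \<partial>P')"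
  proof (rule euclidean_eqI)
    fix b :: 'b assume "b \<in> Basis"
    have "(\<integral>x. h x \<partial>mix_measure MX t P P') \<bullet> b = (\<integral>x. h x \<bullet> b \<partial>mix_measure MX t P P')"
      using I by simp
    also have "\<dots> = (1 - t) * (\<integral>x. h x \<bullet> b \<partial>P) + t * (\<integral>x. h x \<bullet> b \<partial>P')"
      by (intro component(2) integrable_inner_left iP iP')
    also have "\<dots> = ((1 - t) *\<^sub>R (\<integral>x. h x \<partial>P) + t *\<^sub>R (\<integral>x. h x \<partial>P')) \<bullet> b"
      using iP iP' by (simp add: inner_add_left)
    finally show "(\<integral>x. h x \<partial>mix_measure MX t P P') \<bullet> b =
        ((1 - t) *\<^sub>R (\<integral>x. h x \<partial>P) + t *\<^sub>R (\<integral>x. h x \<partial>P')) \<bullet> b" .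
  qed
qed

lemma mix_return_integral_zero_imp_zero:
  fixes c :: "_ \<Rightarrow> 'b::euclidean_space"
  assumes P: "sets P = sets MX" and c: "integrable P c" "(\<integral>x. c x \<partial>P) = 0"
    and x: "x \<in> space MX" and t: "0 < t" "t \<le> 1"
    and mix: "(\<integral>x. c x \<partial>mix_measure MX t P (return MX x)) = 0"
  shows "c x = 0"
proof -
  have cm: "c \<in> borel_measurable MX"
    using borel_measurable_integrable[OF c(1)] P by (simp cong: measurable_cong_sets)
  have "integrable (return MX x) c"
    using cm x by (simp add: integrable_iff_bounded nn_integral_return cong: measurable_cong_sets)
  then have "0 = t *\<^sub>R (\<integral>x. c x \<partial>return MX x)"
    using mix c t cm by (simp add: integral_mix_measure[OF P])
  also have "\<dots> = t *\<^sub>R c x"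
    using x cm by (simp add: integral_return)
  finally show ?thesis using t by simp
qed

lemma
  fixes f :: "'a \<Rightarrow> ennreal"
  assumes f: "f \<in> borel_measurable M" and fin: "(\<integral>\<^sup>+x. f x \<partial>M) < \<infinity>"
  shows integrable_enn2real: "integrable M (\<lambda>x. enn2real (f x))"
    and integral_enn2real: "(\<integral>x. enn2real (f x) \<partial>M) = enn2real (\<integral>\<^sup>+x. f x \<partial>M)"
proof -
  have ae: "AE x in M. f x = ennreal (enn2real (f x))"
    using nn_integral_PInf_AE[OF f] fin by (auto simp: ennreal_enn2real_if)
  then have "(\<integral>\<^sup>+x. ennreal (enn2real (f x)) \<partial>M) < \<infinity>"
    using fin by (simp add: nn_integral_cong_AE[OF ae, symmetric])
  then show "integrable M (\<lambda>x. enn2real (f x))"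
    using f by (intro integrableI_nonneg) auto
  show "(\<integral>x. enn2real (f x) \<partial>M) = enn2real (\<integral>\<^sup>+x. f x \<partial>M)"
    using ae f by (intro enn2real_nn_integral_eq_integral[symmetric]) auto
qed

text \<open>Unlike the library's \<open>integral_bind\<close>, no boundedness of \<open>g\<close> is assumed.\<close>

lemma
  fixes g :: "_ \<Rightarrow> real"
  assumes N: "N \<in> M \<rightarrow>\<^sub>M subprob_algebra B" and g: "g \<in> borel_measurable B"
    and ig: "integrable (M \<bind> N) g" and iN: "\<And>x. x \<in> space M \<Longrightarrow> integrable (N x) g"
  shows integrable_integral_kernel_real: "integrable M (\<lambda>x. \<integral>y. g y \<partial>N x)"
    and integral_bind_integrable_real: "(\<integral>y. g y \<partial>(M \<bind> N)) = (\<integral>x. (\<integral>y. g y \<partial>N x) \<partial>M)"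
proof -
  have part: "integrable M (\<lambda>x. enn2real (\<integral>\<^sup>+y. ennreal (h y) \<partial>N x))"
    "(\<integral>x. enn2real (\<integral>\<^sup>+y. ennreal (h y) \<partial>N x) \<partial>M) = enn2real (\<integral>\<^sup>+y. ennreal (h y) \<partial>(M \<bind> N))"
    if h: "h \<in> borel_measurable B" and fin: "(\<integral>\<^sup>+y. ennreal (h y) \<partial>(M \<bind> N)) \<noteq> \<infinity>" for h
  proof -
    have hm: "(\<lambda>y. ennreal (h y)) \<in> borel_measurable B"
      using h by measurable
    have "(\<lambda>x. \<integral>\<^sup>+y. ennreal (h y) \<partial>N x) \<in> borel_measurable M"
      by (rule measurable_compose[OF N nn_integral_measurable_subprob_algebra[OF hm]])
    moreover have "(\<integral>\<^sup>+x. (\<integral>\<^sup>+y. ennreal (h y) \<partial>N x) \<partial>M) = (\<integral>\<^sup>+y. ennreal (h y) \<partial>(M \<bind> N))"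
      by (rule nn_integral_bind[OF hm N, symmetric])
    ultimately show "integrable M (\<lambda>x. enn2real (\<integral>\<^sup>+y. ennreal (h y) \<partial>N x))"
      "(\<integral>x. enn2real (\<integral>\<^sup>+y. ennreal (h y) \<partial>N x) \<partial>M) = enn2real (\<integral>\<^sup>+y. ennreal (h y) \<partial>(M \<bind> N))"
      using fin by (simp_all add: integrable_enn2real integral_enn2real less_top)
  qed
  note pos = part[OF g integrableD(2)[OF ig]]
  note neg = part[of "\<lambda>y. - g y", OF _ integrableD(3)[OF ig]]
  have split: "(\<integral>y. g y \<partial>N x) =
      enn2real (\<integral>\<^sup>+y. ennreal (g y) \<partial>N x) - enn2real (\<integral>\<^sup>+y. ennreal (- g y) \<partial>N x)"
    if "x \<in> space M" for x
    by (rule real_lebesgue_integral_def[OF iN[OF that]])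
  show "integrable M (\<lambda>x. \<integral>y. g y \<partial>N x)"
    using pos neg g by (subst Bochner_Integration.integrable_cong[OF refl split]) auto
  have "(\<integral>x. (\<integral>y. g y \<partial>N x) \<partial>M) = (\<integral>x. enn2real (\<integral>\<^sup>+y. ennreal (g y) \<partial>N x)
      - enn2real (\<integral>\<^sup>+y. ennreal (- g y) \<partial>N x) \<partial>M)"
    by (rule Bochner_Integration.integral_cong[OF refl split])
  also have "\<dots> = (\<integral>y. g y \<partial>(M \<bind> N))"
    using pos neg g by (simp add: real_lebesgue_integral_def[OF ig])
  finally show "(\<integral>y. g y \<partial>(M \<bind> N)) = (\<integral>x. (\<integral>y. g y \<partial>N x) \<partial>M)" ..
qed

lemma
  fixes g :: "_ \<Rightarrow> 'b::euclidean_space"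
  assumes N: "N \<in> M \<rightarrow>\<^sub>M subprob_algebra B" and g: "g \<in> borel_measurable B"
    and ig: "integrable (M \<bind> N) g" and iN: "\<And>x. x \<in> space M \<Longrightarrow> integrable (N x) g"
  shows integrable_integral_kernel: "integrable M (\<lambda>x. \<integral>y. g y \<partial>N x)"
    and integral_bind_integrable: "(\<integral>y. g y \<partial>(M \<bind> N)) = (\<integral>x. (\<integral>y. g y \<partial>N x) \<partial>M)"
proof -
  have gb: "(\<lambda>y. g y \<bullet> b) \<in> borel_measurable B" for b
    using g by measurable
  have inner: "(\<integral>y. g y \<partial>N x) \<bullet> b = (\<integral>y. g y \<bullet> b \<partial>N x)" if "x \<in> space M" for x b
    using iN[OF that] by simp
  note component = integrable_integral_kernel_real[OF N gb] integral_bind_integrable_real[OF N gb]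
  have "integrable M (\<lambda>x. (\<integral>y. g y \<partial>N x) \<bullet> b)" for b
    using component(1)[of b] ig iN by (subst Bochner_Integration.integrable_cong[OF refl inner]) auto
  then show I: "integrable M (\<lambda>x. \<integral>y. g y \<partial>N x)"
    by (rule integrable_from_components)
  show "(\<integral>y. g y \<partial>(M \<bind> N)) = (\<integral>x. (\<integral>y. g y \<partial>N x) \<partial>M)"
  proof (rule euclidean_eqI)
    fix b :: 'b
    have "(\<integral>y. g y \<partial>(M \<bind> N)) \<bullet> b = (\<integral>y. g y \<bullet> b \<partial>(M \<bind> N))"
      using ig by simp
    also have "\<dots> = (\<integral>x. (\<integral>y. g y \<bullet> b \<partial>N x) \<partial>M)"
      using ig iN by (intro component(2)) auto
    also have "\<dots> = (\<integral>x. (\<integral>y. g y \<partial>N x) \<partial>M) \<bullet> b"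
      using I by (simp add: Bochner_Integration.integral_cong[OF refl inner[symmetric]])
    finally show "(\<integral>y. g y \<partial>(M \<bind> N)) \<bullet> b = (\<integral>x. (\<integral>y. g y \<partial>N x) \<partial>M) \<bullet> b" .
  qed
qed

lemma
  fixes f :: "'y \<times> 'x \<Rightarrow> 'b::euclidean_space"
  assumes K: "K \<in> MX \<rightarrow>\<^sub>M prob_algebra MY" and f: "f \<in> borel_measurable (MY \<Otimes>\<^sub>M MX)"
    and Q: "sets Q = sets MX" and int_joint: "integrable (joint MY MX K Q) f"
    and int_cond: "\<And>x. x \<in> space MX \<Longrightarrow> integrable (K x) (\<lambda>y. f (y, x))"
  shows integrable_integral_conditional: "integrable Q (\<lambda>x. \<integral>y. f (y, x) \<partial>K x)"
    and integral_joint: "(\<integral>z. f z \<partial>joint MY MX K Q) = (\<integral>x. (\<integral>y. f (y, x) \<partial>K x) \<partial>Q)"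
proof -
  have [measurable]: "K \<in> MX \<rightarrow>\<^sub>M subprob_algebra MY"
    using K by (rule measurable_prob_algebraD)
  define N where "N x = K x \<bind> (\<lambda>y. return (MY \<Otimes>\<^sub>M MX) (y, x))" for x
  have "N \<in> MX \<rightarrow>\<^sub>M subprob_algebra (MY \<Otimes>\<^sub>M MX)"
    unfolding N_def by measurable
  then have N: "N \<in> Q \<rightarrow>\<^sub>M subprob_algebra (MY \<Otimes>\<^sub>M MX)"
    using Q by (simp cong: measurable_cong_sets)
  have sQ: "space Q = space MX"
    using Q by (rule sets_eq_imp_space_eq)
  have N_distr: "N x = distr (K x) (MY \<Otimes>\<^sub>M MX) (\<lambda>y. (y, x))"
    and slice: "(\<lambda>y. (y, x)) \<in> K x \<rightarrow>\<^sub>M MY \<Otimes>\<^sub>M MX" if x: "x \<in> space MX" for x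
  proof -
    have "sets (K x) = sets MY" "prob_space (K x)"
      using measurable_space[OF K x] by (auto simp: space_prob_algebra)
    then show "(\<lambda>y. (y, x)) \<in> K x \<rightarrow>\<^sub>M MY \<Otimes>\<^sub>M MX"
      and "N x = distr (K x) (MY \<Otimes>\<^sub>M MX) (\<lambda>y. (y, x))"
      using x prob_space.not_empty unfolding N_def
      by (auto intro!: bind_return_distr' cong: measurable_cong_sets)
  qed
  have iN: "integrable (N x) f" and eN: "(\<integral>z. f z \<partial>N x) = (\<integral>y. f (y, x) \<partial>K x)"
    if "x \<in> space MX" for x
    using int_cond[OF that] f
    by (simp_all add: N_distr[OF that] integrable_distr_eq[OF slice[OF that]]
        integral_distr[OF slice[OF that]])
  have J: "joint MY MX K Q = Q \<bind> N"
    unfolding joint_def N_def ..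
  show "integrable Q (\<lambda>x. \<integral>y. f (y, x) \<partial>K x)"
    using integrable_integral_kernel[OF N f int_joint[unfolded J]] iN
    by (subst Bochner_Integration.integrable_cong[OF refl eN[symmetric]]) (auto simp: sQ)
  have "(\<integral>z. f z \<partial>joint MY MX K Q) = (\<integral>x. (\<integral>z. f z \<partial>N x) \<partial>Q)"
    using integral_bind_integrable[OF N f int_joint[unfolded J]] iN by (simp add: J sQ)
  also have "\<dots> = (\<integral>x. (\<integral>y. f (y, x) \<partial>K x) \<partial>Q)"
    by (rule Bochner_Integration.integral_cong[OF refl]) (simp add: eN sQ)
  finally show "(\<integral>z. f z \<partial>joint MY MX K Q) = (\<integral>x. (\<integral>y. f (y, x) \<partial>K x) \<partial>Q)" .
qed

lemma
  assumes "\<exists>!\<theta>. \<theta> \<in> \<Theta> \<and> (\<integral>z. (case z of (y, x) \<Rightarrow> \<psi> \<theta> y x) \<partial>P) = 0"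
  shows ee_theta_in: "ee_theta \<Theta> \<psi> P \<in> \<Theta>"
    and ee_theta_solves: "(\<integral>z. (case z of (y, x) \<Rightarrow> \<psi> (ee_theta \<Theta> \<psi> P) y x) \<partial>P) = 0"
  using theI'[OF assms] unfolding ee_theta_def by auto

lemma ee_theta_eqI:
  assumes "\<exists>!\<theta>. \<theta> \<in> \<Theta> \<and> (\<integral>z. (case z of (y, x) \<Rightarrow> \<psi> \<theta> y x) \<partial>P) = 0"
    and "\<theta> \<in> \<Theta>" and "(\<integral>z. (case z of (y, x) \<Rightarrow> \<psi> \<theta> y x) \<partial>P) = 0"
  shows "ee_theta \<Theta> \<psi> P = \<theta>"
  unfolding ee_theta_def using assms by (blast intro: the1_equality)

locale ee_model =
  fixes MY :: "'y measure" and MX :: "'x measure"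
    and K :: "'x \<Rightarrow> 'y measure"
    and Acc :: "'x measure set"
    and \<Theta> :: "'a::euclidean_space set"
    and \<psi> :: "'a \<Rightarrow> 'y \<Rightarrow> 'x \<Rightarrow> 'a"
  assumes kernel: "K \<in> MX \<rightarrow>\<^sub>M prob_algebra MY"
    and Acc_nonempty: "Acc \<noteq> {}"
    and Acc_prob: "\<And>PX. PX \<in> Acc \<Longrightarrow> PX \<in> space (prob_algebra MX)"
    and Acc_mix: "\<And>PX PX' t. PX \<in> Acc \<Longrightarrow> PX' \<in> space (prob_algebra MX) \<Longrightarrow>
                    0 \<le> t \<Longrightarrow> t < 1 \<Longrightarrow> mix_measure MX t PX PX' \<in> Acc"
    and psi_meas: "\<And>\<theta>. \<theta> \<in> \<Theta> \<Longrightarrow> (\<lambda>(y, x). \<psi> \<theta> y x) \<in> borel_measurable (MY \<Otimes>\<^sub>M MX)"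
    and int_joint: "\<And>\<theta> PX. \<theta> \<in> \<Theta> \<Longrightarrow> PX \<in> Acc \<Longrightarrow>
                      integrable (joint MY MX K PX) (\<lambda>(y, x). \<psi> \<theta> y x)"
    and int_cond: "\<And>\<theta> x. \<theta> \<in> \<Theta> \<Longrightarrow> x \<in> space MX \<Longrightarrow> integrable (K x) (\<lambda>y. \<psi> \<theta> y x)"
    and ee_unique: "\<And>PX. PX \<in> Acc \<Longrightarrow>
                      \<exists>!\<theta>. \<theta> \<in> \<Theta> \<and> (\<integral>z. (case z of (y, x) \<Rightarrow> \<psi> \<theta> y x) \<partial>(joint MY MX K PX)) = 0"
begin

definition cond_mean :: "'a \<Rightarrow> 'x \<Rightarrow> 'a" where
  "cond_mean \<theta> x = (\<integral>y. \<psi> \<theta> y x \<partial>K x)"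

lemma sets_Acc: "Q \<in> Acc \<Longrightarrow> sets Q = sets MX"
  using Acc_prob by (simp add: space_prob_algebra)

lemma
  assumes "\<theta> \<in> \<Theta>" and "Q \<in> Acc"
  shows integrable_cond_mean: "integrable Q (cond_mean \<theta>)"
    and integral_joint_cond_mean:
      "(\<integral>z. (case z of (y, x) \<Rightarrow> \<psi> \<theta> y x) \<partial>joint MY MX K Q) = (\<integral>x. cond_mean \<theta> x \<partial>Q)"
  using integrable_integral_conditional[OF kernel psi_meas sets_Acc int_joint, OF assms assms]
    integral_joint[OF kernel psi_meas sets_Acc int_joint, OF assms assms] int_cond[OF assms(1)]
  by (simp_all add: cond_mean_def[abs_def])

lemma well_specified_imp_cond_mean_root:
  assumes well_specified: "well_specified (ee_theta \<Theta> \<psi>) MY MX Acc K"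
  shows "\<exists>\<theta>0\<in>\<Theta>. \<forall>x\<in>space MX. cond_mean \<theta>0 x = 0"
proof -
  from Acc_nonempty obtain Q0 where Q0: "Q0 \<in> Acc" by blast
  define \<theta>0 where "\<theta>0 = ee_theta \<Theta> \<psi> (joint MY MX K Q0)"
  have \<theta>0: "\<theta>0 \<in> \<Theta>"
    unfolding \<theta>0_def by (rule ee_theta_in[OF ee_unique[OF Q0]])
  have root: "(\<integral>x. cond_mean \<theta>0 x \<partial>Q) = 0" if "Q \<in> Acc" for Q
  proof -
    have "ee_theta \<Theta> \<psi> (joint MY MX K Q) = \<theta>0"
      using well_specified Q0 that unfolding well_specified_def \<theta>0_def by blast
    then show ?thesis
      using ee_theta_solves[OF ee_unique[OF that]] integral_joint_cond_mean[OF \<theta>0 that] by simp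
  qed
  have "cond_mean \<theta>0 x = 0" if x: "x \<in> space MX" for x
  proof (rule mix_return_integral_zero_imp_zero[OF sets_Acc[OF Q0] integrable_cond_mean[OF \<theta>0 Q0]
      root[OF Q0] x])
    have "return MX x \<in> space (prob_algebra MX)"
      using x by (simp add: space_prob_algebra prob_space_return)
    then show "(\<integral>x. cond_mean \<theta>0 x \<partial>mix_measure MX (1/2) Q0 (return MX x)) = 0"
      by (intro root Acc_mix[OF Q0]) auto
  qed auto
  with \<theta>0 show ?thesis by blast
qed

lemma cond_mean_root_imp_well_specified:
  assumes \<theta>0: "\<theta>0 \<in> \<Theta>" and root: "\<And>x. x \<in> space MX \<Longrightarrow> cond_mean \<theta>0 x = 0"
  shows "well_specified (ee_theta \<Theta> \<psi>) MY MX Acc K"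
proof -
  have "ee_theta \<Theta> \<psi> (joint MY MX K Q) = \<theta>0" if Q: "Q \<in> Acc" for Q
  proof (rule ee_theta_eqI[OF ee_unique[OF Q] \<theta>0])
    have "(\<integral>x. cond_mean \<theta>0 x \<partial>Q) = (\<integral>x. 0 \<partial>Q)"
      using sets_eq_imp_space_eq[OF sets_Acc[OF Q]]
      by (intro Bochner_Integration.integral_cong) (simp_all add: root)
    then show "(\<integral>z. (case z of (y, x) \<Rightarrow> \<psi> \<theta>0 y x) \<partial>joint MY MX K Q) = 0"
      using integral_joint_cond_mean[OF \<theta>0 Q] by simp
  qed
  then show ?thesis
    unfolding well_specified_def by simp
qed

end

theorem lemma3p3p3:
  fixes MY :: "'y measure" and MX :: "'x measure"
    and K :: "'x \<Rightarrow> 'y measure"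
    and Acc :: "'x measure set"
    and \<Theta> :: "'a::euclidean_space set"
    and \<psi> :: "'a \<Rightarrow> 'y \<Rightarrow> 'x \<Rightarrow> 'a"
  assumes kernel: "K \<in> MX \<rightarrow>\<^sub>M prob_algebra MY"
    and Acc_nonempty: "Acc \<noteq> {}"
    and Acc_prob: "\<And>PX. PX \<in> Acc \<Longrightarrow> PX \<in> space (prob_algebra MX)"
    and Acc_mix: "\<And>PX PX' t. PX \<in> Acc \<Longrightarrow> PX' \<in> space (prob_algebra MX) \<Longrightarrow>
                    0 \<le> t \<Longrightarrow> t < 1 \<Longrightarrow> mix_measure MX t PX PX' \<in> Acc"
    and psi_meas: "\<And>\<theta>. \<theta> \<in> \<Theta> \<Longrightarrow> (\<lambda>(y, x). \<psi> \<theta> y x) \<in> borel_measurable (MY \<Otimes>\<^sub>M MX)"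
    and int_joint: "\<And>\<theta> PX. \<theta> \<in> \<Theta> \<Longrightarrow> PX \<in> Acc \<Longrightarrow>
                      integrable (joint MY MX K PX) (\<lambda>(y, x). \<psi> \<theta> y x)"
    and int_cond: "\<And>\<theta> x. \<theta> \<in> \<Theta> \<Longrightarrow> x \<in> space MX \<Longrightarrow> integrable (K x) (\<lambda>y. \<psi> \<theta> y x)"
    and ee_unique: "\<And>PX. PX \<in> Acc \<Longrightarrow>
                      \<exists>!\<theta>. \<theta> \<in> \<Theta> \<and> (\<integral>z. (case z of (y, x) \<Rightarrow> \<psi> \<theta> y x) \<partial>(joint MY MX K PX)) = 0"
  shows "well_specified (ee_theta \<Theta> \<psi>) MY MX Acc K \<longleftrightarrow>
         (\<exists>\<theta>0\<in>\<Theta>. \<forall>x\<in>space MX. (\<integral>y. \<psi> \<theta>0 y x \<partial>(K x)) = 0)"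
proof -
  interpret ee_model MY MX K Acc \<Theta> \<psi>
    by unfold_locales (fact assms)+
  show ?thesis
    using well_specified_imp_cond_mean_root cond_mean_root_imp_well_specified
    unfolding cond_mean_def by blast
qed

end
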